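(* Let $(H,\mu_H,\Delta_H)$ be a bialgebra and $(C,\mu_C)$ a right $H$-module algebra in the usual sense with action $c\otimes h\mapsto c\cdot h$; let $\alpha_H:H\to H$ be a bijective bialgebra endomorphism and $\alpha_C:C\to C$ a bijective algebra endomorphism with $\alpha_C(c\cdot h)=\alpha_C(c)\cdot\alpha_H(h)$ for all $h,c$. Let $H\# C$ be the usual smash product, $H\otimes C$ with $(h\# c)(h'\# c')=hh'_1\#(c\cdot h'_2)c'$. Then $\alpha_H\otimes\alpha_C$ is an algebra endomorphism of $H\# C$ and the Hom-associative algebras $(H\# C)_{\alpha_H\otimes\alpha_C}$ and $H_{\alpha_H}\# C_{\alpha_C}$ coincide, where the latter is the Hom-smash product formed with respect to the right action $c\triangleleft h:=\alpha_C(c\cdot h)$ of the Hom-bialgebra $H_{\alpha_H}$ on $C_{\alpha_C}$.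
   Context: Over a field $k$, (co)units not assumed; a bialgebra is an associative algebra with coassociative multiplicative $\Delta(h)=h_1\otimes h_2$; a right module algebra in the usual sense satisfies $c\cdot(hh')=(c\cdot h)\cdot h'$, $(cc')\cdot h=(c\cdot h_1)(c'\cdot h_2)$. For an associative algebra $(A,\mu)$ with algebra endomorphism $\alpha$, $A_\alpha=(A,\alpha\circ\mu,\alpha)$ is Hom-associative ($\alpha(aa')=\alpha(a)\alpha(a')$, $\alpha(a)(a'a'')=(aa')\alpha(a'')$); $H_{\alpha_H}=(H,\alpha_H\circ\mu_H,\Delta_H\circ\alpha_H,\alpha_H)$ is a Hom-bialgebra and $C_{\alpha_C}$ is a right $H_{\alpha_H}$-module Hom-algebra via $\triangleleft$. For a Hom-bialgebra $(H,\mu_H,\Delta_H,\alpha_H)$ and right $H$-module Hom-algebra $(C,\mu_C,\alpha_C)$ with action $\cdot$ and $\alpha_H,\alpha_C$ bijective, the Hom-smash product $H\# C$ is $H\otimes C$ with structure map $\alpha_H\otimes\alpha_C$ and product $(h\# c)(h'\# c')=h\alpha_H^{-1}(h'_1)\#(\alpha_C^{-1}(c)\cdot\alpha_H^{-2}(h'_2))c'$. *)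

theory Defs
  imports Complex_Main
begin

text \<open>An element of the free k-vector space on a set X is a finitely supported
  function X to k.  The tensor product V (x) W is the free space on V x W modulo the
  subspace spanned by the bilinearity relations; we work with representatives and
  the induced equality relation.\<close>

definition supp :: "('a \<Rightarrow> 'k::zero) \<Rightarrow> 'a set" where
  "supp f = {p. f p \<noteq> 0}"

definition fsupp :: "('a \<Rightarrow> 'k::zero) \<Rightarrow> bool" where
  "fsupp f \<longleftrightarrow> finite (supp f)"

text \<open>basis vector (Dirac function) of the free space: the pure tensor x\<close>
definition bas :: "'a \<Rightarrow> 'a \<Rightarrow> 'k::{zero,one}" where
  "bas x = (\<lambda>p. if p = x then 1 else 0)"

text \<open>linear extension of a map on basis elements into another free space\<close>
definition fext :: "('a \<Rightarrow> 'k::comm_ring_1) \<Rightarrow> ('a \<Rightarrow> 'b \<Rightarrow> 'k) \<Rightarrow> 'b \<Rightarrow> 'k" where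
  "fext f \<phi> = (\<lambda>q. \<Sum>p\<in>supp f. f p * \<phi> p q)"

text \<open>linear extension of a map on basis elements into a vector space with scaling s\<close>
definition vext :: "('k \<Rightarrow> 'v \<Rightarrow> 'v) \<Rightarrow> ('a \<Rightarrow> 'k::zero) \<Rightarrow> ('a \<Rightarrow> 'v::comm_monoid_add) \<Rightarrow> 'v" where
  "vext s f \<phi> = (\<Sum>p\<in>supp f. s (f p) (\<phi> p))"

inductive_set tens2_rel ::
  "('k::field \<Rightarrow> 'a::ab_group_add \<Rightarrow> 'a) \<Rightarrow> ('k \<Rightarrow> 'b::ab_group_add \<Rightarrow> 'b) \<Rightarrow> ('a \<times> 'b \<Rightarrow> 'k) set"
  for sA sB where
  zero: "(\<lambda>_. 0) \<in> tens2_rel sA sB"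
| addL: "(\<lambda>p. bas (x + x', y) p - bas (x, y) p - bas (x', y) p) \<in> tens2_rel sA sB"
| addR: "(\<lambda>p. bas (x, y + y') p - bas (x, y) p - bas (x, y') p) \<in> tens2_rel sA sB"
| smulL: "(\<lambda>p. bas (sA a x, y) p - a * bas (x, y) p) \<in> tens2_rel sA sB"
| smulR: "(\<lambda>p. bas (x, sB a y) p - a * bas (x, y) p) \<in> tens2_rel sA sB"
| add: "f \<in> tens2_rel sA sB \<Longrightarrow> g \<in> tens2_rel sA sB \<Longrightarrow> (\<lambda>p. f p + g p) \<in> tens2_rel sA sB"
| smul: "f \<in> tens2_rel sA sB \<Longrightarrow> (\<lambda>p. a * f p) \<in> tens2_rel sA sB"

definition tens2_eq ::
  "('k::field \<Rightarrow> 'a::ab_group_add \<Rightarrow> 'a) \<Rightarrow> ('k \<Rightarrow> 'b::ab_group_add \<Rightarrow> 'b) \<Rightarrow>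
   ('a \<times> 'b \<Rightarrow> 'k) \<Rightarrow> ('a \<times> 'b \<Rightarrow> 'k) \<Rightarrow> bool" where
  "tens2_eq sA sB f g \<longleftrightarrow> (\<lambda>p. f p - g p) \<in> tens2_rel sA sB"

inductive_set tens3_rel ::
  "('k::field \<Rightarrow> 'a::ab_group_add \<Rightarrow> 'a) \<Rightarrow> ('k \<Rightarrow> 'b::ab_group_add \<Rightarrow> 'b) \<Rightarrow>
   ('k \<Rightarrow> 'c::ab_group_add \<Rightarrow> 'c) \<Rightarrow> ('a \<times> 'b \<times> 'c \<Rightarrow> 'k) set"
  for sA sB sC where
  zero: "(\<lambda>_. 0) \<in> tens3_rel sA sB sC"
| add1: "(\<lambda>p. bas (x + x', y, z) p - bas (x, y, z) p - bas (x', y, z) p) \<in> tens3_rel sA sB sC"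
| add2: "(\<lambda>p. bas (x, y + y', z) p - bas (x, y, z) p - bas (x, y', z) p) \<in> tens3_rel sA sB sC"
| add3: "(\<lambda>p. bas (x, y, z + z') p - bas (x, y, z) p - bas (x, y, z') p) \<in> tens3_rel sA sB sC"
| smul1: "(\<lambda>p. bas (sA a x, y, z) p - a * bas (x, y, z) p) \<in> tens3_rel sA sB sC"
| smul2: "(\<lambda>p. bas (x, sB a y, z) p - a * bas (x, y, z) p) \<in> tens3_rel sA sB sC"
| smul3: "(\<lambda>p. bas (x, y, sC a z) p - a * bas (x, y, z) p) \<in> tens3_rel sA sB sC"
| add: "f \<in> tens3_rel sA sB sC \<Longrightarrow> g \<in> tens3_rel sA sB sC \<Longrightarrow> (\<lambda>p. f p + g p) \<in> tens3_rel sA sB sC"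
| smul: "f \<in> tens3_rel sA sB sC \<Longrightarrow> (\<lambda>p. a * f p) \<in> tens3_rel sA sB sC"

definition tens3_eq ::
  "('k::field \<Rightarrow> 'a::ab_group_add \<Rightarrow> 'a) \<Rightarrow> ('k \<Rightarrow> 'b::ab_group_add \<Rightarrow> 'b) \<Rightarrow>
   ('k \<Rightarrow> 'c::ab_group_add \<Rightarrow> 'c) \<Rightarrow> ('a \<times> 'b \<times> 'c \<Rightarrow> 'k) \<Rightarrow> ('a \<times> 'b \<times> 'c \<Rightarrow> 'k) \<Rightarrow> bool" where
  "tens3_eq sA sB sC f g \<longleftrightarrow> (\<lambda>p. f p - g p) \<in> tens3_rel sA sB sC"

text \<open>f (x) g applied to a representative of A (x) B\<close>
definition tmap2 :: "('a \<Rightarrow> 'a') \<Rightarrow> ('b \<Rightarrow> 'b') \<Rightarrow> ('a \<times> 'b \<Rightarrow> 'k::comm_ring_1) \<Rightarrow> ('a' \<times> 'b' \<Rightarrow> 'k)" where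
  "tmap2 f g X = fext X (\<lambda>(x, y). bas (f x, g y))"

section \<open>Algebras, bialgebras, module algebras (no (co)units)\<close>

text \<open>associative k-algebra: the type is an (associative, non-unital) ring, sA is a
  k-vector-space structure and multiplication is k-bilinear\<close>
definition kalgebra :: "('k::field \<Rightarrow> 'a::ring \<Rightarrow> 'a) \<Rightarrow> bool" where
  "kalgebra sA \<longleftrightarrow> Vector_Spaces.vector_space sA \<and>
     (\<forall>a x y. sA a (x * y) = sA a x * y \<and> sA a (x * y) = x * sA a y)"

text \<open>Delta is a linear map H to H (x) H (given on representatives), coassociative and
  multiplicative\<close>
definition bialgebra :: "('k::field \<Rightarrow> 'h::ring \<Rightarrow> 'h) \<Rightarrow> ('h \<Rightarrow> ('h \<times> 'h \<Rightarrow> 'k)) \<Rightarrow> bool" where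
  "bialgebra sH Delta \<longleftrightarrow> kalgebra sH \<and>
     (\<forall>h. fsupp (Delta h)) \<and>
     (\<forall>h h'. tens2_eq sH sH (Delta (h + h')) (\<lambda>p. Delta h p + Delta h' p)) \<and>
     (\<forall>a h. tens2_eq sH sH (Delta (sH a h)) (\<lambda>p. a * Delta h p)) \<and>
     (\<forall>h. tens3_eq sH sH sH
            (fext (Delta h) (\<lambda>(x, y). fext (Delta x) (\<lambda>(u, v). bas (u, v, y))))
            (fext (Delta h) (\<lambda>(x, y). fext (Delta y) (\<lambda>(u, v). bas (x, u, v))))) \<and>
     (\<forall>h h'. tens2_eq sH sH (Delta (h * h'))
            (fext (Delta h) (\<lambda>(x, y). fext (Delta h') (\<lambda>(x', y'). bas (x * x', y * y')))))"

text \<open>right H-module algebra in the usual sense; the action c (x) h to c.h is a linear map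
  C (x) H to C, i.e. bilinear\<close>
definition right_module_algebra ::
  "('k::field \<Rightarrow> 'h::ring \<Rightarrow> 'h) \<Rightarrow> ('h \<Rightarrow> ('h \<times> 'h \<Rightarrow> 'k)) \<Rightarrow>
   ('k \<Rightarrow> 'c::ring \<Rightarrow> 'c) \<Rightarrow> ('c \<Rightarrow> 'h \<Rightarrow> 'c) \<Rightarrow> bool" where
  "right_module_algebra sH Delta sC act \<longleftrightarrow> kalgebra sC \<and>
     (\<forall>c c' h. act (c + c') h = act c h + act c' h) \<and>
     (\<forall>c h h'. act c (h + h') = act c h + act c h') \<and>
     (\<forall>a c h. act (sC a c) h = sC a (act c h)) \<and>
     (\<forall>a c h. act c (sH a h) = sC a (act c h)) \<and>
     (\<forall>c h h'. act c (h * h') = act (act c h) h') \<and>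
     (\<forall>c c' h. act (c * c') h = vext sC (Delta h) (\<lambda>(x, y). act c x * act c' y))"

definition bialg_endo :: "('k::field \<Rightarrow> 'h::ring \<Rightarrow> 'h) \<Rightarrow> ('h \<Rightarrow> ('h \<times> 'h \<Rightarrow> 'k)) \<Rightarrow> ('h \<Rightarrow> 'h) \<Rightarrow> bool" where
  "bialg_endo sH Delta \<alpha> \<longleftrightarrow> Vector_Spaces.linear sH sH \<alpha> \<and> (\<forall>x y. \<alpha> (x * y) = \<alpha> x * \<alpha> y) \<and>
     (\<forall>h. tens2_eq sH sH (Delta (\<alpha> h)) (tmap2 \<alpha> \<alpha> (Delta h)))"

definition alg_endo :: "('k::field \<Rightarrow> 'c::ring \<Rightarrow> 'c) \<Rightarrow> ('c \<Rightarrow> 'c) \<Rightarrow> bool" where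
  "alg_endo sC \<alpha> \<longleftrightarrow> Vector_Spaces.linear sC sC \<alpha> \<and> (\<forall>x y. \<alpha> (x * y) = \<alpha> x * \<alpha> y)"

text \<open>usual smash product H # C: (h#c)(h'#c') = h h'_1 # (c.h'_2) c', extended bilinearly
  to representatives of H (x) C\<close>
definition smash_mult ::
  "('h \<Rightarrow> ('h \<times> 'h \<Rightarrow> 'k::comm_ring_1)) \<Rightarrow> ('c \<Rightarrow> 'h \<Rightarrow> 'c) \<Rightarrow>
   ('h::times \<times> 'c::times \<Rightarrow> 'k) \<Rightarrow> ('h \<times> 'c \<Rightarrow> 'k) \<Rightarrow> ('h \<times> 'c \<Rightarrow> 'k)" where
  "smash_mult Delta act X Y =
     fext X (\<lambda>(h, c). fext Y (\<lambda>(h', c'). fext (Delta h') (\<lambda>(x, y). bas (h * x, act c y * c'))))"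

text \<open>Hom-smash product of a Hom-bialgebra (H, muH, DeltaH, alphaH) and a right module
  Hom-algebra (C, muC, alphaC) with action act:
  (h#c)(h'#c') = muH h (alphaH^-1 h'_1) # muC (act (alphaC^-1 c) (alphaH^-2 h'_2)) c'\<close>
definition hom_smash_mult ::
  "('h \<Rightarrow> 'h \<Rightarrow> 'h) \<Rightarrow> ('h \<Rightarrow> ('h \<times> 'h \<Rightarrow> 'k::comm_ring_1)) \<Rightarrow> ('h \<Rightarrow> 'h) \<Rightarrow>
   ('c \<Rightarrow> 'c \<Rightarrow> 'c) \<Rightarrow> ('c \<Rightarrow> 'c) \<Rightarrow> ('c \<Rightarrow> 'h \<Rightarrow> 'c) \<Rightarrow>
   ('h \<times> 'c \<Rightarrow> 'k) \<Rightarrow> ('h \<times> 'c \<Rightarrow> 'k) \<Rightarrow> ('h \<times> 'c \<Rightarrow> 'k)" where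
  "hom_smash_mult muH DeltaH \<alpha>H muC \<alpha>C act X Y =
     fext X (\<lambda>(h, c). fext Y (\<lambda>(h', c'). fext (DeltaH h') (\<lambda>(x, y).
        bas (muH h (inv \<alpha>H x), muC (act (inv \<alpha>C c) (inv \<alpha>H (inv \<alpha>H y))) c'))))"

end

theory Submission
  imports Defs
begin

text \<open>On pure tensors both products, as well as \<open>(\<alpha>\<^sub>H \<otimes> \<alpha>\<^sub>C)((h\<otimes>c)(h'\<otimes>c'))\<close>, are images of
  \<open>\<Delta>(h')\<close> or \<open>\<Delta>(\<alpha>\<^sub>H h')\<close> under a tensor product f \<otimes> g of linear maps.  As \<open>\<alpha>\<^sub>H\<close> is a
  coalgebra map, \<open>(f \<otimes> g)(\<Delta>(\<alpha>\<^sub>H h')) = ((f \<circ> \<alpha>\<^sub>H) \<otimes> (g \<circ> \<alpha>\<^sub>H))(\<Delta> h')\<close> in \<open>H \<otimes> C\<close>; this holds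
  in the quotient only because f \<otimes> g preserves the bilinearity relations.  Multiplicativity of
  \<open>\<alpha>\<^sub>H\<close>, \<open>\<alpha>\<^sub>C\<close> and the compatibility \<open>\<alpha>\<^sub>C(c\<cdot>h) = \<alpha>\<^sub>C(c)\<cdot>\<alpha>\<^sub>H(h)\<close> then identify \<open>f \<circ> \<alpha>\<^sub>H\<close> and
  \<open>g \<circ> \<alpha>\<^sub>H\<close> with \<open>x \<mapsto> \<alpha>\<^sub>H(hx)\<close> and \<open>y \<mapsto> \<alpha>\<^sub>C((c\<cdot>y)c')\<close>; in the Hom-smash product the inverses
  \<open>\<alpha>\<^sup>-\<^sup>1\<close> cancel against the outer \<open>\<alpha>\<close>'s of the twisted multiplications and action.\<close>

lemma supp_bas: "supp (bas x :: _ \<Rightarrow> 'k::zero_neq_one) = {x}"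
  by (auto simp: supp_def bas_def)

lemma fsupp_bas [simp]: "fsupp (bas x :: _ \<Rightarrow> 'k::zero_neq_one)"
  by (simp add: fsupp_def supp_bas)

lemma fsupp_zero [simp]: "fsupp (\<lambda>_. 0)"
  by (simp add: fsupp_def supp_def)

lemma fsupp_add: "fsupp f \<Longrightarrow> fsupp g \<Longrightarrow> fsupp (\<lambda>p. f p + g p :: 'k::monoid_add)"
  unfolding fsupp_def supp_def
  by (rule finite_subset[of _ "{p. f p \<noteq> 0} \<union> {p. g p \<noteq> 0}"]) auto

lemma fsupp_diff: "fsupp f \<Longrightarrow> fsupp g \<Longrightarrow> fsupp (\<lambda>p. f p - g p :: 'k::group_add)"
  unfolding fsupp_def supp_def
  by (rule finite_subset[of _ "{p. f p \<noteq> 0} \<union> {p. g p \<noteq> 0}"]) auto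

lemma fsupp_smul: "fsupp f \<Longrightarrow> fsupp (\<lambda>p. a * f p :: 'k::mult_zero)"
  unfolding fsupp_def supp_def
  by (rule finite_subset[of _ "{p. f p \<noteq> 0}"]) auto

lemma fext_eq_sum_superset:
  assumes "finite S" "supp X \<subseteq> S"
  shows "fext X \<phi> = (\<lambda>q. \<Sum>p\<in>S. X p * \<phi> p q)"
proof
  fix q
  show "fext X \<phi> q = (\<Sum>p\<in>S. X p * \<phi> p q)"
    unfolding fext_def
    by (rule sum.mono_neutral_left) (use assms in \<open>auto simp: supp_def\<close>)
qed

lemma fext_bas [simp]: "fext (bas x :: _ \<Rightarrow> 'k::comm_ring_1) \<phi> = \<phi> x"
  by (simp add: fext_def supp_bas, simp add: bas_def)

lemma fext_zero [simp]: "fext (\<lambda>_. 0) \<phi> = (\<lambda>_. 0)"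
  by (simp add: fext_def supp_def)

lemma fext_add:
  assumes "fsupp X" "fsupp Y"
  shows "fext (\<lambda>p. X p + Y p) \<phi> = (\<lambda>q. fext X \<phi> q + fext Y \<phi> q)"
proof -
  let ?S = "supp X \<union> supp Y"
  have S: "finite ?S" using assms by (simp add: fsupp_def)
  have "fext (\<lambda>p. X p + Y p) \<phi> = (\<lambda>q. \<Sum>p\<in>?S. (X p + Y p) * \<phi> p q)"
    by (rule fext_eq_sum_superset[OF S]) (auto simp: supp_def)
  moreover have "fext X \<phi> = (\<lambda>q. \<Sum>p\<in>?S. X p * \<phi> p q)"
    by (rule fext_eq_sum_superset[OF S]) auto
  moreover have "fext Y \<phi> = (\<lambda>q. \<Sum>p\<in>?S. Y p * \<phi> p q)"
    by (rule fext_eq_sum_superset[OF S]) auto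
  ultimately show ?thesis by (simp add: distrib_right sum.distrib)
qed

lemma fext_diff:
  assumes "fsupp X" "fsupp Y"
  shows "fext (\<lambda>p. X p - Y p) \<phi> = (\<lambda>q. fext X \<phi> q - fext Y \<phi> q)"
proof -
  let ?S = "supp X \<union> supp Y"
  have S: "finite ?S" using assms by (simp add: fsupp_def)
  have "fext (\<lambda>p. X p - Y p) \<phi> = (\<lambda>q. \<Sum>p\<in>?S. (X p - Y p) * \<phi> p q)"
    by (rule fext_eq_sum_superset[OF S]) (auto simp: supp_def)
  moreover have "fext X \<phi> = (\<lambda>q. \<Sum>p\<in>?S. X p * \<phi> p q)"
    by (rule fext_eq_sum_superset[OF S]) auto
  moreover have "fext Y \<phi> = (\<lambda>q. \<Sum>p\<in>?S. Y p * \<phi> p q)"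
    by (rule fext_eq_sum_superset[OF S]) auto
  ultimately show ?thesis by (simp add: left_diff_distrib sum_subtractf)
qed

lemma fext_smul:
  assumes "fsupp X"
  shows "fext (\<lambda>p. a * X p) \<phi> = (\<lambda>q. a * fext X \<phi> q)"
proof -
  have S: "finite (supp X)" using assms by (simp add: fsupp_def)
  have "fext (\<lambda>p. a * X p) \<phi> = (\<lambda>q. \<Sum>p\<in>supp X. (a * X p) * \<phi> p q)"
    by (rule fext_eq_sum_superset[OF S]) (auto simp: supp_def)
  moreover have "fext X \<phi> = (\<lambda>q. \<Sum>p\<in>supp X. X p * \<phi> p q)"
    by (rule fext_eq_sum_superset[OF S]) auto
  ultimately show ?thesis by (simp add: sum_distrib_left mult.assoc)
qed

lemma supp_fext_subset: "supp (fext X \<phi>) \<subseteq> (\<Union>p\<in>supp X. supp (\<phi> p))"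
proof
  fix q assume "q \<in> supp (fext X \<phi>)"
  hence "(\<Sum>p\<in>supp X. X p * \<phi> p q) \<noteq> 0" by (simp add: supp_def fext_def)
  then obtain p where "p \<in> supp X" "X p * \<phi> p q \<noteq> 0" by (meson sum.neutral)
  thus "q \<in> (\<Union>p\<in>supp X. supp (\<phi> p))" by (auto simp: supp_def)
qed

lemma fsupp_fext:
  assumes "fsupp X" "\<forall>p\<in>supp X. fsupp (\<phi> p)"
  shows "fsupp (fext X \<phi>)"
  using assms supp_fext_subset[of X \<phi>] unfolding fsupp_def
  by (meson finite_UN_I finite_subset)

lemma fext_fext:
  assumes "fsupp X" "\<forall>p\<in>supp X. fsupp (\<phi> p)"
  shows "fext (fext X \<phi>) \<psi> = fext X (\<lambda>p. fext (\<phi> p) \<psi>)"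
proof
  fix q
  let ?S = "\<Union>p\<in>supp X. supp (\<phi> p)"
  have S: "finite ?S" using assms by (auto simp: fsupp_def)
  have "fext (fext X \<phi>) \<psi> q = (\<Sum>r\<in>?S. fext X \<phi> r * \<psi> r q)"
    using fext_eq_sum_superset[OF S supp_fext_subset] by metis
  also have "\<dots> = (\<Sum>p\<in>supp X. X p * (\<Sum>r\<in>?S. \<phi> p r * \<psi> r q))"
    by (simp add: fext_def sum_distrib_right sum_distrib_left mult.assoc sum.swap[of _ ?S])
  also have "\<dots> = (\<Sum>p\<in>supp X. X p * fext (\<phi> p) \<psi> q)"
  proof (rule sum.cong[OF refl])
    fix p assume "p \<in> supp X"
    hence "fext (\<phi> p) \<psi> = (\<lambda>q. \<Sum>r\<in>?S. \<phi> p r * \<psi> r q)"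
      by (intro fext_eq_sum_superset[OF S]) auto
    thus "X p * (\<Sum>r\<in>?S. \<phi> p r * \<psi> r q) = X p * fext (\<phi> p) \<psi> q" by simp
  qed
  also have "\<dots> = fext X (\<lambda>p. fext (\<phi> p) \<psi>) q" by (simp add: fext_def)
  finally show "fext (fext X \<phi>) \<psi> q = fext X (\<lambda>p. fext (\<phi> p) \<psi>) q" .
qed

lemma fsupp_tens2_rel: "r \<in> tens2_rel sA sB \<Longrightarrow> fsupp r"
  by (induction rule: tens2_rel.induct) (simp_all add: fsupp_add fsupp_diff fsupp_smul)

lemma tens2_rel_sum:
  assumes "finite S" "\<forall>p\<in>S. d p \<in> tens2_rel sA sB"
  shows "(\<lambda>q. \<Sum>p\<in>S. a p * d p q) \<in> tens2_rel sA sB"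
  using assms
proof (induction S rule: finite_induct)
  case empty
  then show ?case by (simp add: tens2_rel.zero)
next
  case (insert x F)
  have "(\<lambda>q. a x * d x q + (\<Sum>p\<in>F. a p * d p q)) \<in> tens2_rel sA sB"
    using insert by (intro tens2_rel.add tens2_rel.smul) auto
  thus ?case using insert by simp
qed

lemma tens2_eq_sym: "tens2_eq sA sB f g \<Longrightarrow> tens2_eq sA sB g f"
  unfolding tens2_eq_def using tens2_rel.smul[of "\<lambda>p. f p - g p" sA sB "-1"] by simp

lemma tens2_eq_fext_cong:
  assumes "\<forall>p\<in>supp X. tens2_eq sA sB (\<phi> p) (\<psi> p)"
  shows "tens2_eq sA sB (fext X \<phi>) (fext X \<psi>)"
proof (cases "finite (supp X)")
  case True
  have "(\<lambda>q. \<Sum>p\<in>supp X. X p * (\<phi> p q - \<psi> p q)) \<in> tens2_rel sA sB"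
    using tens2_rel_sum[OF True, of "\<lambda>p q. \<phi> p q - \<psi> p q"] assms
    by (simp add: tens2_eq_def)
  thus ?thesis by (simp add: tens2_eq_def fext_def right_diff_distrib sum_subtractf)
next
  case False
  thus ?thesis by (simp add: tens2_eq_def fext_def tens2_rel.zero)
qed

lemma tmap2_bas [simp]: "tmap2 f g (bas (x, y)) = bas (f x, g y)"
  by (simp add: tmap2_def)

lemma fsupp_tmap2: "fsupp D \<Longrightarrow> fsupp (tmap2 f g D)"
  unfolding tmap2_def by (rule fsupp_fext) (simp_all add: case_prod_beta)

lemma tmap2_add: "fsupp D \<Longrightarrow> fsupp D' \<Longrightarrow> tmap2 f g (\<lambda>p. D p + D' p) = (\<lambda>q. tmap2 f g D q + tmap2 f g D' q)"
  unfolding tmap2_def by (rule fext_add)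

lemma tmap2_diff: "fsupp D \<Longrightarrow> fsupp D' \<Longrightarrow> tmap2 f g (\<lambda>p. D p - D' p) = (\<lambda>q. tmap2 f g D q - tmap2 f g D' q)"
  unfolding tmap2_def by (rule fext_diff)

lemma tmap2_smul: "fsupp D \<Longrightarrow> tmap2 f g (\<lambda>p. a * D p) = (\<lambda>q. a * tmap2 f g D q)"
  unfolding tmap2_def by (rule fext_smul)

lemma tmap2_fext:
  "fsupp X \<Longrightarrow> \<forall>p\<in>supp X. fsupp (\<phi> p) \<Longrightarrow> tmap2 f g (fext X \<phi>) = fext X (\<lambda>p. tmap2 f g (\<phi> p))"
  unfolding tmap2_def by (rule fext_fext)

lemma fext_tmap2: "fsupp D \<Longrightarrow> fext (tmap2 f g D) \<phi> = fext D (\<lambda>(x, y). \<phi> (f x, g y))"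
  unfolding tmap2_def by (subst fext_fext) (simp_all add: case_prod_unfold)

lemma tmap2_tmap2: "fsupp D \<Longrightarrow> tmap2 f g (tmap2 A B D) = tmap2 (f \<circ> A) (g \<circ> B) D"
  by (simp add: tmap2_def fext_tmap2[unfolded tmap2_def])

lemma tmap2_tens2_rel:
  assumes f: "Vector_Spaces.linear sA sP f" and g: "Vector_Spaces.linear sB sQ g"
    and r: "r \<in> tens2_rel sA sB"
  shows "tmap2 f g r \<in> tens2_rel sP sQ"
  using r
proof (induction rule: tens2_rel.induct)
  case zero
  then show ?case by (simp add: tmap2_def tens2_rel.zero)
next
  case (add r r')
  then show ?case by (simp add: fsupp_tens2_rel tmap2_add tens2_rel.add)
next
  case (smul r a)
  then show ?case by (simp add: fsupp_tens2_rel tmap2_smul tens2_rel.smul)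
qed (use f g in \<open>simp_all add: Vector_Spaces.linear_iff fsupp_diff fsupp_smul tmap2_diff tmap2_smul
                    tens2_rel.intros\<close>)

lemma tmap2_cong:
  assumes "Vector_Spaces.linear sA sP f" "Vector_Spaces.linear sB sQ g"
    and "tens2_eq sA sB D D'" "fsupp D" "fsupp D'"
  shows "tens2_eq sP sQ (tmap2 f g D) (tmap2 f g D')"
  using tmap2_tens2_rel[OF assms(1,2), of "\<lambda>p. D p - D' p"] assms(3-)
  by (simp add: tens2_eq_def tmap2_diff)

lemma linear_mult_left: "kalgebra sA \<Longrightarrow> Vector_Spaces.linear sA sA ((*) x)"
  unfolding kalgebra_def Vector_Spaces.linear_iff by (metis distrib_left)

lemma linear_mult_right: "kalgebra sA \<Longrightarrow> Vector_Spaces.linear sA sA (\<lambda>y. y * x)"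
  by (simp add: kalgebra_def Vector_Spaces.linear_iff distrib_right)

lemma linear_right_module_algebra_act:
  "kalgebra sH \<Longrightarrow> right_module_algebra sH Delta sC act \<Longrightarrow> Vector_Spaces.linear sH sC (act c)"
  by (simp add: kalgebra_def right_module_algebra_def Vector_Spaces.linear_iff)

lemma linear_inv_bij:
  assumes f: "Vector_Spaces.linear s s f" and "bij f"
  shows "Vector_Spaces.linear s s (inv f)"
proof -
  have inv: "inv f (f x) = x" "f (inv f x) = x" for x
    using \<open>bij f\<close> by (simp_all add: bij_is_inj bij_inv_eq_iff surj_f_inv_f bij_is_surj)
  show ?thesis
    using f unfolding Vector_Spaces.linear_iff by (metis inv)
qed

lemma tmap2_comp_bialg_endo:
  assumes endo: "bialg_endo sH Delta \<alpha>" and fD: "\<forall>h. fsupp (Delta h)"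
    and f: "Vector_Spaces.linear sH sP f" and g: "Vector_Spaces.linear sH sQ g"
  shows "tens2_eq sP sQ (tmap2 (f \<circ> \<alpha>) (g \<circ> \<alpha>) (Delta h)) (tmap2 f g (Delta (\<alpha> h)))"
proof -
  have "tens2_eq sH sH (tmap2 \<alpha> \<alpha> (Delta h)) (Delta (\<alpha> h))"
    using endo by (simp add: bialg_endo_def tens2_eq_sym)
  hence "tens2_eq sP sQ (tmap2 f g (tmap2 \<alpha> \<alpha> (Delta h))) (tmap2 f g (Delta (\<alpha> h)))"
    using fD by (intro tmap2_cong[OF f g]) (simp_all add: fsupp_tmap2)
  thus ?thesis using fD by (simp add: tmap2_tmap2)
qed

lemma smash_mult_eq_fext_tmap2:
  "smash_mult Delta act X Y =
     fext X (\<lambda>(h, c). fext Y (\<lambda>(h', c'). tmap2 ((*) h) (\<lambda>y. act c y * c') (Delta h')))"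
  by (simp add: smash_mult_def tmap2_def)

lemma hom_smash_mult_eq_fext_tmap2:
  "hom_smash_mult muH DeltaH \<alpha>H muC \<alpha>C act X Y =
     fext X (\<lambda>(h, c). fext Y (\<lambda>(h', c').
       tmap2 (\<lambda>x. muH h (inv \<alpha>H x)) (\<lambda>y. muC (act (inv \<alpha>C c) (inv \<alpha>H (inv \<alpha>H y))) c') (DeltaH h')))"
  by (simp add: hom_smash_mult_def tmap2_def)

lemma tmap2_smash_mult:
  assumes "fsupp X" "fsupp Y" "\<forall>h. fsupp (Delta h)"
  shows "tmap2 A B (smash_mult Delta act X Y) =
     fext X (\<lambda>(h, c). fext Y (\<lambda>(h', c'). tmap2 (A \<circ> (*) h) (B \<circ> (\<lambda>y. act c y * c')) (Delta h')))"
  using assms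
  by (simp add: smash_mult_eq_fext_tmap2 tmap2_fext fsupp_fext fsupp_tmap2 tmap2_tmap2 case_prod_unfold)

lemma smash_mult_tmap2:
  assumes "fsupp X" "fsupp Y"
  shows "smash_mult Delta act (tmap2 A B X) (tmap2 A B Y) =
     fext X (\<lambda>(h, c). fext Y (\<lambda>(h', c'). tmap2 ((*) (A h)) (\<lambda>y. act (B c) y * B c') (Delta (A h'))))"
  using assms by (simp add: smash_mult_eq_fext_tmap2 fext_tmap2)

lemma tmap2_smash_mult_tens2_eq:
  assumes fX: "fsupp X" and fY: "fsupp Y" and bialg: "bialgebra sH Delta"
    and endoH: "bialg_endo sH Delta \<alpha>H"
    and g_linear: "\<And>c c'. Vector_Spaces.linear sH sC (g c c')"
    and g_\<alpha>H: "\<And>c c' y. g c c' (\<alpha>H y) = \<alpha>C (act c y * c')"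
  shows "tens2_eq sH sC (tmap2 \<alpha>H \<alpha>C (smash_mult Delta act X Y))
           (fext X (\<lambda>(h, c). fext Y (\<lambda>(h', c'). tmap2 ((*) (\<alpha>H h)) (g c c') (Delta (\<alpha>H h')))))"
proof -
  have fD: "\<forall>h. fsupp (Delta h)" and kH: "kalgebra sH"
    using bialg by (simp_all add: bialgebra_def)
  have "(*) (\<alpha>H h) \<circ> \<alpha>H = \<alpha>H \<circ> (*) h" for h
    using endoH by (auto simp: bialg_endo_def)
  moreover have "g c c' \<circ> \<alpha>H = \<alpha>C \<circ> (\<lambda>y. act c y * c')" for c c'
    by (auto simp: g_\<alpha>H)
  ultimately have "tens2_eq sH sC (tmap2 (\<alpha>H \<circ> (*) h) (\<alpha>C \<circ> (\<lambda>y. act c y * c')) (Delta h'))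
                     (tmap2 ((*) (\<alpha>H h)) (g c c') (Delta (\<alpha>H h')))" for h c h' c'
    using tmap2_comp_bialg_endo[OF endoH fD linear_mult_left[OF kH] g_linear] by metis
  thus ?thesis
    unfolding tmap2_smash_mult[OF fX fY fD]
    by (auto split: prod.splits intro!: tens2_eq_fext_cong)
qed

lemma tmap2_smash_mult_multiplicative:
  assumes fX: "fsupp X" and fY: "fsupp Y" and bialg: "bialgebra sH Delta"
    and modalg: "right_module_algebra sH Delta sC act"
    and endoH: "bialg_endo sH Delta \<alpha>H" and endoC: "alg_endo sC \<alpha>C"
    and compat: "\<And>c h. \<alpha>C (act c h) = act (\<alpha>C c) (\<alpha>H h)"
  shows "tens2_eq sH sC (tmap2 \<alpha>H \<alpha>C (smash_mult Delta act X Y))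
           (smash_mult Delta act (tmap2 \<alpha>H \<alpha>C X) (tmap2 \<alpha>H \<alpha>C Y))"
  unfolding smash_mult_tmap2[OF fX fY]
proof (rule tmap2_smash_mult_tens2_eq[OF fX fY bialg endoH])
  have kH: "kalgebra sH" and kC: "kalgebra sC"
    using bialg modalg by (simp_all add: bialgebra_def right_module_algebra_def)
  show "Vector_Spaces.linear sH sC (\<lambda>y. act (\<alpha>C c) y * \<alpha>C c')" for c c'
    using Vector_Spaces.linear_compose[OF linear_right_module_algebra_act[OF kH modalg]
        linear_mult_right[OF kC]]
    by (simp add: comp_def)
  show "act (\<alpha>C c) (\<alpha>H y) * \<alpha>C c' = \<alpha>C (act c y * c')" for c c' y
    using endoC compat by (simp add: alg_endo_def)
qed

lemma tmap2_smash_mult_eq_hom_smash_mult: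
  assumes fX: "fsupp X" and fY: "fsupp Y" and bialg: "bialgebra sH Delta"
    and modalg: "right_module_algebra sH Delta sC act"
    and endoH: "bialg_endo sH Delta \<alpha>H" and bijH: "bij \<alpha>H"
    and endoC: "alg_endo sC \<alpha>C" and bijC: "bij \<alpha>C"
    and compat: "\<And>c h. \<alpha>C (act c h) = act (\<alpha>C c) (\<alpha>H h)"
  shows "tens2_eq sH sC (tmap2 \<alpha>H \<alpha>C (smash_mult Delta act X Y))
           (hom_smash_mult (\<lambda>x y. \<alpha>H (x * y)) (\<lambda>h. Delta (\<alpha>H h)) \<alpha>H
                           (\<lambda>x y. \<alpha>C (x * y)) \<alpha>C (\<lambda>c h. \<alpha>C (act c h)) X Y)"
proof -
  have kH: "kalgebra sH" and kC: "kalgebra sC"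
    using bialg modalg by (simp_all add: bialgebra_def right_module_algebra_def)
  have linH: "Vector_Spaces.linear sH sH \<alpha>H" and mulH: "\<And>x y. \<alpha>H (x * y) = \<alpha>H x * \<alpha>H y"
    using endoH by (simp_all add: bialg_endo_def)
  have linC: "Vector_Spaces.linear sC sC \<alpha>C"
    using endoC by (simp add: alg_endo_def)
  have invH: "\<And>x. inv \<alpha>H (\<alpha>H x) = x" "\<And>x. \<alpha>H (inv \<alpha>H x) = x"
    and invC: "\<And>x. \<alpha>C (inv \<alpha>C x) = x"
    using bijH bijC by (simp_all add: bij_is_inj bij_is_surj surj_f_inv_f)
  let ?g = "\<lambda>c c' y. \<alpha>C (act c (inv \<alpha>H y) * c')"
  have "Vector_Spaces.linear sH sC (?g c c')" for c c'
    using Vector_Spaces.linear_compose[OF Vector_Spaces.linear_compose[OF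
        Vector_Spaces.linear_compose[OF linear_inv_bij[OF linH bijH]
          linear_right_module_algebra_act[OF kH modalg, of c]] linear_mult_right[OF kC, of c']] linC]
    by (simp add: comp_def)
  hence "tens2_eq sH sC (tmap2 \<alpha>H \<alpha>C (smash_mult Delta act X Y))
           (fext X (\<lambda>(h, c). fext Y (\<lambda>(h', c'). tmap2 ((*) (\<alpha>H h)) (?g c c') (Delta (\<alpha>H h')))))"
    by (intro tmap2_smash_mult_tens2_eq[OF fX fY bialg endoH]) (simp_all add: comp_def invH)
  moreover have "hom_smash_mult (\<lambda>x y. \<alpha>H (x * y)) (\<lambda>h. Delta (\<alpha>H h)) \<alpha>H
                   (\<lambda>x y. \<alpha>C (x * y)) \<alpha>C (\<lambda>c h. \<alpha>C (act c h)) X Y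
      = fext X (\<lambda>(h, c). fext Y (\<lambda>(h', c'). tmap2 ((*) (\<alpha>H h)) (?g c c') (Delta (\<alpha>H h'))))"
    by (simp add: hom_smash_mult_eq_fext_tmap2 mulH invH invC compat)
  ultimately show ?thesis by simp
qed

theorem proposition3p14:
  fixes sH :: "'k::field \<Rightarrow> 'h::ring \<Rightarrow> 'h"
    and sC :: "'k \<Rightarrow> 'c::ring \<Rightarrow> 'c"
    and Delta :: "'h \<Rightarrow> ('h \<times> 'h \<Rightarrow> 'k)"
    and act :: "'c \<Rightarrow> 'h \<Rightarrow> 'c"
    and \<alpha>H :: "'h \<Rightarrow> 'h" and \<alpha>C :: "'c \<Rightarrow> 'c"
  assumes bialg: "bialgebra sH Delta"
    and modalg: "right_module_algebra sH Delta sC act"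
    and endoH: "bialg_endo sH Delta \<alpha>H" and bijH: "bij \<alpha>H"
    and endoC: "alg_endo sC \<alpha>C" and bijC: "bij \<alpha>C"
    and compat: "\<And>c h. \<alpha>C (act c h) = act (\<alpha>C c) (\<alpha>H h)"
  shows "\<forall>X Y. fsupp X \<longrightarrow> fsupp Y \<longrightarrow>
           tens2_eq sH sC (tmap2 \<alpha>H \<alpha>C (smash_mult Delta act X Y))
                          (smash_mult Delta act (tmap2 \<alpha>H \<alpha>C X) (tmap2 \<alpha>H \<alpha>C Y))
         \<and> tens2_eq sH sC (tmap2 \<alpha>H \<alpha>C (smash_mult Delta act X Y))
                          (hom_smash_mult (\<lambda>x y. \<alpha>H (x * y)) (\<lambda>h. Delta (\<alpha>H h)) \<alpha>H
                                          (\<lambda>x y. \<alpha>C (x * y)) \<alpha>C (\<lambda>c h. \<alpha>C (act c h)) X Y)"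
  using tmap2_smash_mult_multiplicative[OF _ _ bialg modalg endoH endoC compat]
    tmap2_smash_mult_eq_hom_smash_mult[OF _ _ bialg modalg endoH bijH endoC bijC compat]
  by blast

end
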